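(* If $Y^*\in\mathcal L^1(\mathcal Q)$ and $\rho_{\mathcal Q}$ is continuous from above at $0$, then (i) $\sup_{\tau\in\mathcal T}\inf_{\mathrm Q\in\overline{\mathcal Q}}\mathbb E_{\mathrm Q}[Y_\tau]=\sup_{\tau\in\mathcal T_f}\inf_{\mathrm Q\in\overline{\mathcal Q}}\mathbb E_{\mathrm Q}[Y_\tau]$; (ii) $\inf_{\mathrm Q\in\overline{\mathcal Q}}\sup_{\tau\in\mathcal T}\mathbb E_{\mathrm Q}[Y_\tau]=\inf_{\mathrm Q\in\overline{\mathcal Q}}\sup_{\tau\in\mathcal T_f}\mathbb E_{\mathrm Q}[Y_\tau]$.
   Context: Let $(\Omega,\mathcal F,(\mathcal F_t)_{0\le t\le T},\mathrm P)$ be a filtered probability space ($0<T<\infty$) with right-continuous filtration, $\mathcal F=\mathcal F_T$, $\mathcal F_0$ trivial and containing all $\mathrm P$-null sets. $\mathcal T$ is the set of stopping times $\tau\le T$ and $\mathcal T_f$ the set of those with finite range. $\mathcal Q$ is a nonempty set of probability measures on $\mathcal F$, each absolutely continuous w.r.t. $\mathrm P$. $\mathcal L^1(\mathcal Q)$ is the set of random variables $X$ with $\sup_{\mathrm Q\in\mathcal Q}\mathbb E_{\mathrm Q}[|X|]<\infty$. $Y=(Y_t)_{0\le t\le T}$ is a right-continuous adapted process with bounded paths, quasi left-uppersemicontinuous w.r.t. $\mathrm P$, and $Y^*:=\sup_{t\in[0,T]}|Y_t|$. $\mathcal X$ is the set of random variables $X$ with $|X|\le C(Y^*+1)$ $\mathrm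 P$-a.s. for some $C>0$; $\rho_{\mathcal Q}(X)=\sup_{\mathrm Q\in\mathcal Q}\mathbb E_{\mathrm Q}[X]$ for $X\in\mathcal X$; $\rho_{\mathcal Q}$ is continuous from above at $0$ if $\rho_{\mathcal Q}(X_n)\searrow0$ whenever $X_n\in\mathcal X$, $X_n\searrow0$ $\mathrm P$-a.s. $\overline{\mathcal Q}$ is the set of probability measures $\mathrm Q$ on $\mathcal F$ such that every $X\in\mathcal X$ is $\mathrm Q$-integrable and $\mathbb E_{\mathrm Q}[X]\le\rho_{\mathcal Q}(X)$ for all $X\in\mathcal X$. *)

theory Defs
  imports "HOL-Probability.Probability"
begin

definition standing_filtration :: "'a measure \<Rightarrow> real \<Rightarrow> (real \<Rightarrow> 'a set set) \<Rightarrow> bool" where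
  "standing_filtration M T F \<longleftrightarrow>
     (\<forall>t\<in>{0..T}. sigma_algebra (space M) (F t)) \<and>
     (\<forall>s t. 0 \<le> s \<longrightarrow> s \<le> t \<longrightarrow> t \<le> T \<longrightarrow> F s \<subseteq> F t) \<and>
     (\<forall>t\<in>{0..<T}. F t = (\<Inter>s\<in>{t<..T}. F s)) \<and>
     F T = sets M \<and>
     (\<forall>A\<in>F 0. measure M A = 0 \<or> measure M A = 1) \<and>
     null_sets M \<subseteq> F 0"

definition stopping_times :: "'a measure \<Rightarrow> real \<Rightarrow> (real \<Rightarrow> 'a set set) \<Rightarrow> ('a \<Rightarrow> real) set" where
  "stopping_times M T F =
     {\<tau>. (\<forall>\<omega>\<in>space M. 0 \<le> \<tau> \<omega> \<and> \<tau> \<omega> \<le> T) \<and>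
          (\<forall>t\<in>{0..T}. {\<omega>\<in>space M. \<tau> \<omega> \<le> t} \<in> F t)}"

definition finite_stopping_times :: "'a measure \<Rightarrow> real \<Rightarrow> (real \<Rightarrow> 'a set set) \<Rightarrow> ('a \<Rightarrow> real) set" where
  "finite_stopping_times M T F = {\<tau>\<in>stopping_times M T F. finite (\<tau> ` space M)}"

definition quasi_left_usc :: "'a measure \<Rightarrow> real \<Rightarrow> (real \<Rightarrow> 'a set set) \<Rightarrow> (real \<Rightarrow> 'a \<Rightarrow> real) \<Rightarrow> bool" where
  "quasi_left_usc M T F Y \<longleftrightarrow>
     (\<forall>\<sigma> \<tau>. (\<forall>n. \<sigma> n \<in> stopping_times M T F) \<longrightarrow> \<tau> \<in> stopping_times M T F \<longrightarrow>
        (\<forall>\<omega>\<in>space M. incseq (\<lambda>n. \<sigma> n \<omega>) \<and> (\<lambda>n. \<sigma> n \<omega>) \<longlonglongrightarrow> \<tau> \<omega>) \<longrightarrow>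
        (AE \<omega> in M. limsup (\<lambda>n. ereal (Y (\<sigma> n \<omega>) \<omega>)) \<le> ereal (Y (\<tau> \<omega>) \<omega>)))"

definition admissible_process :: "'a measure \<Rightarrow> real \<Rightarrow> (real \<Rightarrow> 'a set set) \<Rightarrow> (real \<Rightarrow> 'a \<Rightarrow> real) \<Rightarrow> bool" where
  "admissible_process M T F Y \<longleftrightarrow>
     (\<forall>t\<in>{0..T}. Y t \<in> measurable (sigma (space M) (F t)) borel) \<and>
     (\<forall>\<omega>\<in>space M. \<forall>t\<in>{0..<T}. ((\<lambda>s. Y s \<omega>) \<longlongrightarrow> Y t \<omega>) (at_right t)) \<and>
     (\<forall>\<omega>\<in>space M. bounded ((\<lambda>t. Y t \<omega>) ` {0..T})) \<and>
     quasi_left_usc M T F Y"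

definition Ystar :: "real \<Rightarrow> (real \<Rightarrow> 'a \<Rightarrow> real) \<Rightarrow> 'a \<Rightarrow> real" where
  "Ystar T Y \<omega> = (SUP t\<in>{0..T}. \<bar>Y t \<omega>\<bar>)"

definition admissible_measures :: "'a measure \<Rightarrow> 'a measure set \<Rightarrow> bool" where
  "admissible_measures M Qs \<longleftrightarrow> Qs \<noteq> {} \<and>
     (\<forall>Q\<in>Qs. prob_space Q \<and> sets Q = sets M \<and> absolutely_continuous M Q)"

definition L1_Q :: "'a measure set \<Rightarrow> ('a \<Rightarrow> real) \<Rightarrow> bool" where
  "L1_Q Qs X \<longleftrightarrow> (\<forall>Q\<in>Qs. integrable Q X) \<and> (\<exists>C. \<forall>Q\<in>Qs. (\<integral>\<omega>. \<bar>X \<omega>\<bar> \<partial>Q) \<le> C)"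

definition Xset :: "'a measure \<Rightarrow> real \<Rightarrow> (real \<Rightarrow> 'a \<Rightarrow> real) \<Rightarrow> ('a \<Rightarrow> real) set" where
  "Xset M T Y = {X. X \<in> borel_measurable M \<and>
      (\<exists>C>0. AE \<omega> in M. \<bar>X \<omega>\<bar> \<le> C * (Ystar T Y \<omega> + 1))}"

definition rho :: "'a measure set \<Rightarrow> ('a \<Rightarrow> real) \<Rightarrow> ereal" where
  "rho Qs X = (SUP Q\<in>Qs. ereal (\<integral>\<omega>. X \<omega> \<partial>Q))"

definition rho_cont_above_0 :: "'a measure \<Rightarrow> real \<Rightarrow> (real \<Rightarrow> 'a \<Rightarrow> real) \<Rightarrow> 'a measure set \<Rightarrow> bool" where
  "rho_cont_above_0 M T Y Qs \<longleftrightarrow>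
     (\<forall>Xn. (\<forall>n. Xn n \<in> Xset M T Y) \<longrightarrow>
        (AE \<omega> in M. decseq (\<lambda>n. Xn n \<omega>) \<and> (\<lambda>n. Xn n \<omega>) \<longlonglongrightarrow> 0) \<longrightarrow>
        (\<lambda>n. rho Qs (Xn n)) \<longlonglongrightarrow> 0)"

definition Qbar :: "'a measure \<Rightarrow> real \<Rightarrow> (real \<Rightarrow> 'a \<Rightarrow> real) \<Rightarrow> 'a measure set \<Rightarrow> 'a measure set" where
  "Qbar M T Y Qs = {Q. prob_space Q \<and> sets Q = sets M \<and>
      (\<forall>X\<in>Xset M T Y. integrable Q X \<and> ereal (\<integral>\<omega>. X \<omega> \<partial>Q) \<le> rho Qs X)}"

end

theory Submission
  imports Defs
begin

text \<open>Rounding a stopping time tau up to the grid of mesh T/2^n gives finite-valued stopping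
  times tau_n decreasing to tau, so Y(tau_n) converges to Y(tau) by right continuity. The tail
  suprema Z_n = sup_{m >= n} |Y(tau_m) - Y(tau)| are dominated by 2 Y* and decrease to 0, hence
  rho(Z_n) tends to 0 by continuity from above. Every Q in Qbar is dominated by rho, so
  E_Q[Y(tau)] <= E_Q[Y(tau_n)] + rho(Z_n) uniformly in Q, and both identities follow.\<close>

lemma standing_filtration_mono:
  assumes "standing_filtration M T F" "0 \<le> s" "s \<le> t" "t \<le> T"
  shows "F s \<subseteq> F t"
  using assms unfolding standing_filtration_def by blast

lemma standing_filtration_subset_sets:
  assumes "standing_filtration M T F" "0 \<le> t" "t \<le> T"
  shows "F t \<subseteq> sets M"
  using standing_filtration_mono[OF assms order_refl] assms(1)
  unfolding standing_filtration_def by simp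

lemma stopping_time_borel_measurable:
  assumes "standing_filtration M T F" "\<tau> \<in> stopping_times M T F"
  shows "\<tau> \<in> borel_measurable M"
proof (rule borel_measurable_iff_le[THEN iffD2], intro allI)
  fix a :: real
  consider "a < 0" | "0 \<le> a" "a \<le> T" | "T < a" by linarith
  then show "{\<omega> \<in> space M. \<tau> \<omega> \<le> a} \<in> sets M"
  proof cases
    case 1
    then have "{\<omega> \<in> space M. \<tau> \<omega> \<le> a} = {}"
      using assms(2) by (force simp: stopping_times_def)
    then show ?thesis by (metis sets.empty_sets)
  next
    case 2
    then show ?thesis
      using assms standing_filtration_subset_sets[OF assms(1) 2] by (auto simp: stopping_times_def)
  next
    case 3
    then have "{\<omega> \<in> space M. \<tau> \<omega> \<le> a} = space M"
      using assms(2) by (force simp: stopping_times_def)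
    then show ?thesis by (metis sets.top)
  qed
qed

lemma admissible_process_borel_measurable:
  assumes sf: "standing_filtration M T F" and Y: "admissible_process M T F Y" and t: "t \<in> {0..T}"
  shows "Y t \<in> borel_measurable M"
proof -
  have "sigma_algebra (space M) (F t)" using sf t by (auto simp: standing_filtration_def)
  then have "sets (sigma (space M) (F t)) = F t" by (rule sigma_algebra.sets_measure_of_eq)
  moreover have "Y t \<in> measurable (sigma (space M) (F t)) borel"
    using Y t by (auto simp: admissible_process_def)
  ultimately show ?thesis
    using standing_filtration_subset_sets[OF sf] t
    unfolding measurable_def by (auto simp: space_measure_of_conv)
qed

lemma abs_le_Ystar:
  assumes "admissible_process M T F Y" "\<omega> \<in> space M" "t \<in> {0..T}"
  shows "\<bar>Y t \<omega>\<bar> \<le> Ystar T Y \<omega>"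
proof -
  have "bounded ((\<lambda>t. Y t \<omega>) ` {0..T})" using assms by (auto simp: admissible_process_def)
  then have "bdd_above ((\<lambda>t. \<bar>Y t \<omega>\<bar>) ` {0..T})"
    by (auto simp: bounded_iff intro: bdd_aboveI2)
  then show ?thesis unfolding Ystar_def using assms(3) by (rule cSUP_upper2) simp
qed

lemma XsetI:
  assumes "X \<in> borel_measurable M" "0 < C"
    and "\<And>\<omega>. \<omega> \<in> space M \<Longrightarrow> \<bar>X \<omega>\<bar> \<le> C * (Ystar T Y \<omega> + 1)"
  shows "X \<in> Xset M T Y"
  using assms unfolding Xset_def by (auto intro!: AE_I2)

lemma Qbar_integrable_le_rho:
  assumes "Q \<in> Qbar M T Y Qs" "X \<in> Xset M T Y"
  shows "integrable Q X" and "ereal (\<integral>\<omega>. X \<omega> \<partial>Q) \<le> rho Qs X"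
  using assms unfolding Qbar_def by auto

definition grid_ceiling :: "real \<Rightarrow> real \<Rightarrow> real" where
  "grid_ceiling c x = real_of_int \<lceil>x * c\<rceil> / c"

lemma grid_ceiling_le_iff:
  assumes "0 < c"
  shows "grid_ceiling c x \<le> t \<longleftrightarrow> x \<le> real_of_int \<lfloor>t * c\<rfloor> / c"
proof -
  have "grid_ceiling c x \<le> t \<longleftrightarrow> \<lceil>x * c\<rceil> \<le> \<lfloor>t * c\<rfloor>"
    using assms by (simp add: grid_ceiling_def divide_le_eq le_floor_iff)
  also have "\<dots> \<longleftrightarrow> x \<le> real_of_int \<lfloor>t * c\<rfloor> / c"
    using assms by (simp add: ceiling_le_iff le_divide_eq)
  finally show ?thesis .
qed

lemma grid_ceiling_bounds:
  assumes "0 < c"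
  shows "x \<le> grid_ceiling c x" and "grid_ceiling c x < x + 1 / c"
proof -
  have "x * c \<le> real_of_int \<lceil>x * c\<rceil>" "real_of_int \<lceil>x * c\<rceil> < x * c + 1" by linarith+
  then show "x \<le> grid_ceiling c x" "grid_ceiling c x < x + 1 / c"
    using assms by (simp_all add: grid_ceiling_def le_divide_eq divide_less_eq distrib_right)
qed

lemma grid_ceiling_tendsto:
  assumes "\<And>n. 0 < c n" and "filterlim c at_top sequentially"
  shows "(\<lambda>n. grid_ceiling (c n) x) \<longlonglongrightarrow> x"
proof (rule real_tendsto_sandwich[where f="\<lambda>n. x" and h="\<lambda>n. x + 1 / c n"])
  have "(\<lambda>n. x + inverse (c n)) \<longlonglongrightarrow> x + 0"
    by (intro tendsto_add tendsto_const tendsto_inverse_0_at_top assms(2))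
  then show "(\<lambda>n. x + 1 / c n) \<longlonglongrightarrow> x" by (simp add: inverse_eq_divide)
  show "\<forall>\<^sub>F n in sequentially. x \<le> grid_ceiling (c n) x"
    "\<forall>\<^sub>F n in sequentially. grid_ceiling (c n) x \<le> x + 1 / c n"
    using grid_ceiling_bounds[OF assms(1)] by (simp_all add: less_imp_le)
qed simp

text \<open>The grid {k/c | 0 \<le> k \<le> N} must end exactly at T, hence T c = N.\<close>
lemma grid_ceiling_finite_stopping_time:
  assumes sf: "standing_filtration M T F" and \<tau>: "\<tau> \<in> stopping_times M T F"
    and c: "0 < c" and N: "T * c = real N"
  shows "(\<lambda>\<omega>. grid_ceiling c (\<tau> \<omega>)) \<in> finite_stopping_times M T F"
proof -
  have \<tau>_range: "0 \<le> \<tau> \<omega> \<and> \<tau> \<omega> \<le> T" if "\<omega> \<in> space M" for \<omega>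
    using \<tau> that by (auto simp: stopping_times_def)
  have grid_T: "real_of_int \<lfloor>T * c\<rfloor> / c = T" using c by (simp add: N divide_eq_eq)
  have range: "0 \<le> grid_ceiling c (\<tau> \<omega>) \<and> grid_ceiling c (\<tau> \<omega>) \<le> T" if "\<omega> \<in> space M" for \<omega>
    using grid_ceiling_bounds(1)[OF c, of "\<tau> \<omega>"] grid_ceiling_le_iff[OF c, of "\<tau> \<omega>" T]
      \<tau>_range[OF that] grid_T by auto
  have "(\<lambda>\<omega>. grid_ceiling c (\<tau> \<omega>)) ` space M \<subseteq> (\<lambda>k. real_of_int k / c) ` {0..int N}"
  proof (rule image_subsetI)
    fix \<omega> assume \<omega>: "\<omega> \<in> space M"
    have "0 \<le> \<tau> \<omega> * c" "\<tau> \<omega> * c \<le> real N"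
      using \<tau>_range[OF \<omega>] c N mult_right_mono[of "\<tau> \<omega>" T c] by auto
    then have "\<lceil>\<tau> \<omega> * c\<rceil> \<in> {0..int N}" by (simp add: ceiling_le_iff)
    then show "grid_ceiling c (\<tau> \<omega>) \<in> (\<lambda>k. real_of_int k / c) ` {0..int N}"
      unfolding grid_ceiling_def by blast
  qed
  then have "finite ((\<lambda>\<omega>. grid_ceiling c (\<tau> \<omega>)) ` space M)" by (rule finite_subset) simp
  moreover have "{\<omega> \<in> space M. grid_ceiling c (\<tau> \<omega>) \<le> t} \<in> F t" if t: "t \<in> {0..T}" for t
  proof -
    define s where "s = real_of_int \<lfloor>t * c\<rfloor> / c"
    have "0 \<le> s" "s \<le> t"
      using t c by (simp_all add: s_def divide_le_eq)
    moreover have "{\<omega> \<in> space M. grid_ceiling c (\<tau> \<omega>) \<le> t} = {\<omega> \<in> space M. \<tau> \<omega> \<le> s}"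
      using grid_ceiling_le_iff[OF c] by (auto simp: s_def)
    ultimately show ?thesis
      using \<tau> t standing_filtration_mono[OF sf, of s t] by (auto simp: stopping_times_def)
  qed
  ultimately show ?thesis using range by (auto simp: finite_stopping_times_def stopping_times_def)
qed

lemma finite_stopping_time_process_measurable:
  assumes sf: "standing_filtration M T F" and Y: "admissible_process M T F Y"
    and \<sigma>: "\<sigma> \<in> finite_stopping_times M T F"
  shows "(\<lambda>\<omega>. Y (\<sigma> \<omega>) \<omega>) \<in> borel_measurable M"
proof (rule measurable_compose_countable'[where I="\<sigma> ` space M" and f=Y and g=\<sigma>])
  have fin: "finite (\<sigma> ` space M)" and st: "\<sigma> \<in> stopping_times M T F"
    using \<sigma> by (auto simp: finite_stopping_times_def)
  show "Y t \<in> borel_measurable M" if "t \<in> \<sigma> ` space M" for t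
    using admissible_process_borel_measurable[OF sf Y] st that by (auto simp: stopping_times_def)
  show "countable (\<sigma> ` space M)" using fin by (rule countable_finite)
  show "\<sigma> \<in> M \<rightarrow>\<^sub>M count_space (\<sigma> ` space M)"
    unfolding measurable_count_space_eq2[OF fin]
    using measurable_sets[OF stopping_time_borel_measurable[OF sf st]] by auto
qed

lemma tendsto_right_continuous_compose:
  fixes f :: "'a::linorder_topology \<Rightarrow> 'b::topological_space"
  assumes "(f \<longlongrightarrow> f t) (at_right t)" "\<And>n. t \<le> s n" "(s \<longlongrightarrow> t) G"
  shows "((\<lambda>n. f (s n)) \<longlongrightarrow> f t) G"
proof -
  have "continuous (at t within {t..}) f"
    using assms(1) by (simp add: continuous_within at_within_Ici_at_right)
  then show ?thesis
    by (rule continuous_within_tendsto_compose') (use assms(2,3) in simp_all)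
qed

lemma admissible_process_grid_ceiling_tendsto:
  assumes Y: "admissible_process M T F Y" and \<omega>: "\<omega> \<in> space M" and x: "0 \<le> x" "x \<le> T"
    and c: "\<And>n. 0 < c n" "filterlim c at_top sequentially"
    and below_T: "\<And>n. grid_ceiling (c n) x \<le> T"
  shows "(\<lambda>n. Y (grid_ceiling (c n) x) \<omega>) \<longlonglongrightarrow> Y x \<omega>"
proof (cases "x < T")
  case True
  then have "((\<lambda>s. Y s \<omega>) \<longlongrightarrow> Y x \<omega>) (at_right x)"
    using Y \<omega> x by (auto simp: admissible_process_def)
  then show ?thesis
    using grid_ceiling_bounds(1)[OF c(1)] grid_ceiling_tendsto[OF c]
    by (rule tendsto_right_continuous_compose)
next
  case False
  then have "grid_ceiling (c n) x = x" for n
    using grid_ceiling_bounds(1)[OF c(1), of x n] below_T[of n] x by simp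
  then show ?thesis by simp
qed

lemma tail_sup_decseq_tendsto_0:
  fixes u :: "nat \<Rightarrow> real"
  assumes bound: "\<And>m. \<bar>u m\<bar> \<le> B" and u: "u \<longlonglongrightarrow> 0"
  shows "decseq (\<lambda>n. SUP m\<in>{n..}. \<bar>u m\<bar>)" and "(\<lambda>n. SUP m\<in>{n..}. \<bar>u m\<bar>) \<longlonglongrightarrow> 0"
proof -
  have bdd: "bdd_above ((\<lambda>m. \<bar>u m\<bar>) ` A)" for A using bound by (intro bdd_aboveI2)
  show "decseq (\<lambda>n. SUP m\<in>{n..}. \<bar>u m\<bar>)"
    by (rule decseq_SucI, rule cSUP_subset_mono) (auto intro: bdd)
  show "(\<lambda>n. SUP m\<in>{n..}. \<bar>u m\<bar>) \<longlonglongrightarrow> 0"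
  proof (rule tendstoI)
    fix r :: real assume "0 < r"
    then obtain N where N: "\<And>m. N \<le> m \<Longrightarrow> \<bar>u m\<bar> < r / 2"
      using tendstoD[OF u, of "r / 2"] by (auto simp: eventually_sequentially)
    have "dist (SUP m\<in>{n..}. \<bar>u m\<bar>) 0 < r" if "N \<le> n" for n
    proof -
      have "0 \<le> \<bar>u n\<bar>" "\<bar>u n\<bar> \<le> (SUP m\<in>{n..}. \<bar>u m\<bar>)" by (auto intro: cSUP_upper bdd)
      moreover have "(SUP m\<in>{n..}. \<bar>u m\<bar>) \<le> r / 2"
        using N that by (intro cSUP_least) (auto intro: less_imp_le)
      ultimately show ?thesis using \<open>0 < r\<close> by simp
    qed
    then show "\<forall>\<^sub>F n in sequentially. dist (SUP m\<in>{n..}. \<bar>u m\<bar>) 0 < r"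
      by (auto simp: eventually_sequentially)
  qed
qed

text \<open>D n itself need not decrease; continuity from above is applied to the tail suprema
  sup_{m >= n} |D m|, which dominate D n and are controlled by every Q in Qbar.\<close>
lemma rho_cont_above_0_uniform_Qbar:
  assumes rc: "rho_cont_above_0 M T Y Qs" and D: "\<And>m. D m \<in> borel_measurable M"
    and C: "0 < C" and bound: "\<And>m \<omega>. \<omega> \<in> space M \<Longrightarrow> \<bar>D m \<omega>\<bar> \<le> C * (Ystar T Y \<omega> + 1)"
    and lim: "\<And>\<omega>. \<omega> \<in> space M \<Longrightarrow> (\<lambda>m. D m \<omega>) \<longlonglongrightarrow> 0" and e: "0 < e"
  shows "\<exists>n. \<forall>Q\<in>Qbar M T Y Qs. (\<integral>\<omega>. D n \<omega> \<partial>Q) < e"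
proof -
  define Z where "Z n \<omega> = (SUP m\<in>{n..}. \<bar>D m \<omega>\<bar>)" for n \<omega>
  have bdd: "bdd_above ((\<lambda>m. \<bar>D m \<omega>\<bar>) ` A)" if "\<omega> \<in> space M" for A \<omega>
    using bound[OF that] by (intro bdd_aboveI2)
  have D_le_Z: "D n \<omega> \<le> Z n \<omega>" and Z_bound: "\<bar>Z n \<omega>\<bar> \<le> C * (Ystar T Y \<omega> + 1)"
    if "\<omega> \<in> space M" for n \<omega>
  proof -
    have "\<bar>D n \<omega>\<bar> \<le> Z n \<omega>" unfolding Z_def by (auto intro: cSUP_upper bdd[OF that])
    moreover have "Z n \<omega> \<le> C * (Ystar T Y \<omega> + 1)"
      unfolding Z_def using bound[OF that] by (intro cSUP_least) auto
    ultimately show "D n \<omega> \<le> Z n \<omega>" "\<bar>Z n \<omega>\<bar> \<le> C * (Ystar T Y \<omega> + 1)" by auto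
  qed
  have Z_X: "Z n \<in> Xset M T Y" for n
  proof (rule XsetI[OF _ C Z_bound])
    show "Z n \<in> borel_measurable M"
      unfolding Z_def[abs_def] by (rule borel_measurable_cSUP) (auto intro: bdd borel_measurable_abs[OF D])
  qed
  have "(\<lambda>n. rho Qs (Z n)) \<longlonglongrightarrow> 0"
    using rc Z_X tail_sup_decseq_tendsto_0[OF bound lim]
    unfolding rho_cont_above_0_def Z_def by (auto intro!: AE_I2)
  then obtain n where n: "rho Qs (Z n) < ereal e"
    using order_tendstoD(2)[of _ 0 sequentially "ereal e"] e
    by (auto simp: zero_ereal_def eventually_sequentially)
  have "(\<integral>\<omega>. D n \<omega> \<partial>Q) < e" if Q: "Q \<in> Qbar M T Y Qs" for Q
  proof -
    have sQ: "space Q = space M"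
      using Q unfolding Qbar_def by (metis (mono_tags) mem_Collect_eq sets_eq_imp_space_eq)
    have "(\<integral>\<omega>. D n \<omega> \<partial>Q) \<le> (\<integral>\<omega>. Z n \<omega> \<partial>Q)"
      using Qbar_integrable_le_rho(1)[OF Q] XsetI[OF D C bound] Z_X D_le_Z sQ
      by (intro integral_mono) auto
    moreover have "ereal (\<integral>\<omega>. Z n \<omega> \<partial>Q) < ereal e"
      using Qbar_integrable_le_rho(2)[OF Q Z_X] n by (rule order.strict_trans1)
    ultimately show ?thesis by simp
  qed
  then show ?thesis by blast
qed

lemma stopping_time_grid_approximants:
  assumes T: "0 < T" and sf: "standing_filtration M T F" and Y: "admissible_process M T F Y"
    and \<tau>: "\<tau> \<in> stopping_times M T F"
  obtains \<sigma> where "\<And>n. \<sigma> n \<in> finite_stopping_times M T F"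
    and "\<And>\<omega>. \<omega> \<in> space M \<Longrightarrow> (\<lambda>n. Y (\<sigma> n \<omega>) \<omega>) \<longlonglongrightarrow> Y (\<tau> \<omega>) \<omega>"
proof
  define c :: "nat \<Rightarrow> real" where "c n = 2 ^ n / T" for n
  have c_pos: "0 < c n" for n using T by (simp add: c_def)
  have "filterlim (\<lambda>n. norm ((2::real) ^ n)) at_top sequentially"
    by (intro filterlim_at_infinity_imp_norm_at_top filterlim_realpow_sequentially_gt1) simp
  then have c_top: "filterlim c at_top sequentially"
    using filterlim_at_top_mult_tendsto_pos[OF tendsto_const[of "inverse T"]] T
    unfolding c_def by (simp add: divide_inverse)
  show fst: "(\<lambda>\<omega>. grid_ceiling (c n) (\<tau> \<omega>)) \<in> finite_stopping_times M T F" for n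
    using T by (intro grid_ceiling_finite_stopping_time[OF sf \<tau> c_pos, of n "2 ^ n"]) (simp add: c_def)
  fix \<omega> assume \<omega>: "\<omega> \<in> space M"
  show "(\<lambda>n. Y (grid_ceiling (c n) (\<tau> \<omega>)) \<omega>) \<longlonglongrightarrow> Y (\<tau> \<omega>) \<omega>"
    using \<tau> fst \<omega>
    by (intro admissible_process_grid_ceiling_tendsto[OF Y \<omega> _ _ c_pos c_top])
      (auto simp: finite_stopping_times_def stopping_times_def)
qed

lemma stopping_time_approx_by_finite:
  assumes T: "0 < T" and sf: "standing_filtration M T F" and Y: "admissible_process M T F Y"
    and rc: "rho_cont_above_0 M T Y Qs" and \<tau>: "\<tau> \<in> stopping_times M T F" and e: "0 < e"
  shows "\<exists>\<sigma>\<in>finite_stopping_times M T F. \<forall>Q\<in>Qbar M T Y Qs.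
           ereal (\<integral>\<omega>. Y (\<tau> \<omega>) \<omega> \<partial>Q) \<le> ereal (\<integral>\<omega>. Y (\<sigma> \<omega>) \<omega> \<partial>Q) + ereal e"
proof -
  obtain \<sigma> where \<sigma>_fst: "\<And>n. \<sigma> n \<in> finite_stopping_times M T F"
    and conv: "\<And>\<omega>. \<omega> \<in> space M \<Longrightarrow> (\<lambda>n. Y (\<sigma> n \<omega>) \<omega>) \<longlonglongrightarrow> Y (\<tau> \<omega>) \<omega>"
    using stopping_time_grid_approximants[OF T sf Y \<tau>] by blast
  have Y\<sigma>_meas: "(\<lambda>\<omega>. Y (\<sigma> n \<omega>) \<omega>) \<in> borel_measurable M" for n
    by (rule finite_stopping_time_process_measurable[OF sf Y \<sigma>_fst])
  have Y\<tau>_meas: "(\<lambda>\<omega>. Y (\<tau> \<omega>) \<omega>) \<in> borel_measurable M"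
    by (rule borel_measurable_LIMSEQ_real[OF conv Y\<sigma>_meas])
  have abs_le: "\<bar>Y (\<tau> \<omega>) \<omega>\<bar> \<le> Ystar T Y \<omega>" "\<bar>Y (\<sigma> n \<omega>) \<omega>\<bar> \<le> Ystar T Y \<omega>"
    if "\<omega> \<in> space M" for n \<omega>
    using abs_le_Ystar[OF Y that] \<tau> \<sigma>_fst[of n] that
    by (auto simp: finite_stopping_times_def stopping_times_def)
  have "\<exists>n. \<forall>Q\<in>Qbar M T Y Qs. (\<integral>\<omega>. Y (\<tau> \<omega>) \<omega> - Y (\<sigma> n \<omega>) \<omega> \<partial>Q) < e"
  proof (rule rho_cont_above_0_uniform_Qbar[OF rc _ _ _ _ e,
        where D="\<lambda>m \<omega>. Y (\<tau> \<omega>) \<omega> - Y (\<sigma> m \<omega>) \<omega>" and C=2])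
    show "(\<lambda>\<omega>. Y (\<tau> \<omega>) \<omega> - Y (\<sigma> m \<omega>) \<omega>) \<in> borel_measurable M" for m
      using Y\<tau>_meas Y\<sigma>_meas by measurable
    show "\<bar>Y (\<tau> \<omega>) \<omega> - Y (\<sigma> m \<omega>) \<omega>\<bar> \<le> 2 * (Ystar T Y \<omega> + 1)" if "\<omega> \<in> space M" for m \<omega>
      using abs_le(1)[OF that] abs_le(2)[OF that, of m] by (simp add: abs_le_iff)
    show "(\<lambda>m. Y (\<tau> \<omega>) \<omega> - Y (\<sigma> m \<omega>) \<omega>) \<longlonglongrightarrow> 0" if "\<omega> \<in> space M" for \<omega>
      using tendsto_diff[OF tendsto_const[of "Y (\<tau> \<omega>) \<omega>"] conv[OF that]] by simp
  qed simp
  then obtain n where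
    n: "\<And>Q. Q \<in> Qbar M T Y Qs \<Longrightarrow> (\<integral>\<omega>. Y (\<tau> \<omega>) \<omega> - Y (\<sigma> n \<omega>) \<omega> \<partial>Q) < e"
    by blast
  have in_Xset: "(\<lambda>\<omega>. Y (\<tau> \<omega>) \<omega>) \<in> Xset M T Y" "(\<lambda>\<omega>. Y (\<sigma> n \<omega>) \<omega>) \<in> Xset M T Y"
    using abs_le by (auto intro!: XsetI[where C=1] Y\<tau>_meas Y\<sigma>_meas simp: add_increasing2)
  show ?thesis
  proof (intro bexI[OF _ \<sigma>_fst] ballI)
    fix Q assume Q: "Q \<in> Qbar M T Y Qs"
    show "ereal (\<integral>\<omega>. Y (\<tau> \<omega>) \<omega> \<partial>Q) \<le> ereal (\<integral>\<omega>. Y (\<sigma> n \<omega>) \<omega> \<partial>Q) + ereal e"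
      using n[OF Q] Qbar_integrable_le_rho(1)[OF Q in_Xset(1)] Qbar_integrable_le_rho(1)[OF Q in_Xset(2)]
      by simp
  qed
qed

lemma SUP_eq_SUP_subset_approx:
  fixes f :: "'a \<Rightarrow> ereal"
  assumes "B \<subseteq> A" and approx: "\<And>a e. a \<in> A \<Longrightarrow> 0 < e \<Longrightarrow> \<exists>b\<in>B. f a \<le> f b + ereal e"
  shows "(SUP a\<in>A. f a) = (SUP b\<in>B. f b)"
proof (rule antisym)
  show "(SUP a\<in>A. f a) \<le> (SUP b\<in>B. f b)"
  proof (rule SUP_least, rule ereal_le_epsilon2)
    fix a e assume "a \<in> A" "0 < (e::real)"
    then obtain b where "b \<in> B" "f a \<le> f b + ereal e" using approx by blast
    then show "f a \<le> (SUP b\<in>B. f b) + ereal e"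
      by (meson SUP_upper add_right_mono order_trans)
  qed
  show "(SUP b\<in>B. f b) \<le> (SUP a\<in>A. f a)" using \<open>B \<subseteq> A\<close> by (rule SUP_subset_mono) simp
qed

lemma INF_le_INF_plus_ereal:
  fixes f g :: "'a \<Rightarrow> ereal"
  assumes "\<And>q. q \<in> Q \<Longrightarrow> f q \<le> g q + ereal e"
  shows "(INF q\<in>Q. f q) \<le> (INF q\<in>Q. g q) + ereal e"
proof -
  have "(INF q\<in>Q. f q) - ereal e \<le> (INF q\<in>Q. g q)"
  proof (rule INF_greatest)
    fix q assume "q \<in> Q"
    then have "(INF q\<in>Q. f q) \<le> g q + ereal e" using assms by (meson INF_lower order_trans)
    then show "(INF q\<in>Q. f q) - ereal e \<le> g q" by (simp add: ereal_minus_le_iff)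
  qed
  then show ?thesis by (simp add: ereal_minus_le_iff)
qed

theorem lemma6p6:
  fixes M :: "'a measure" and T :: real and F :: "real \<Rightarrow> 'a set set"
    and Qs :: "'a measure set" and Y :: "real \<Rightarrow> 'a \<Rightarrow> real"
  assumes "prob_space M" and "0 < T"
    and "standing_filtration M T F"
    and "admissible_measures M Qs"
    and "admissible_process M T F Y"
    and "L1_Q Qs (Ystar T Y)"
    and "rho_cont_above_0 M T Y Qs"
  shows "((SUP \<tau>\<in>stopping_times M T F. INF Q\<in>Qbar M T Y Qs. ereal (\<integral>\<omega>. Y (\<tau> \<omega>) \<omega> \<partial>Q))
       = (SUP \<tau>\<in>finite_stopping_times M T F. INF Q\<in>Qbar M T Y Qs. ereal (\<integral>\<omega>. Y (\<tau> \<omega>) \<omega> \<partial>Q)))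
     \<and> ((INF Q\<in>Qbar M T Y Qs. SUP \<tau>\<in>stopping_times M T F. ereal (\<integral>\<omega>. Y (\<tau> \<omega>) \<omega> \<partial>Q))
       = (INF Q\<in>Qbar M T Y Qs. SUP \<tau>\<in>finite_stopping_times M T F. ereal (\<integral>\<omega>. Y (\<tau> \<omega>) \<omega> \<partial>Q)))"
proof -
  define E where "E \<tau> Q = ereal (\<integral>\<omega>. Y (\<tau> \<omega>) \<omega> \<partial>Q)" for \<tau> :: "'a \<Rightarrow> real" and Q
  have sub: "finite_stopping_times M T F \<subseteq> stopping_times M T F"
    by (auto simp: finite_stopping_times_def)
  have approx: "\<exists>\<sigma>\<in>finite_stopping_times M T F. \<forall>Q\<in>Qbar M T Y Qs. E \<tau> Q \<le> E \<sigma> Q + ereal e"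
    if "\<tau> \<in> stopping_times M T F" "0 < e" for \<tau> e
    using stopping_time_approx_by_finite[OF assms(2,3,5,7) that] unfolding E_def .
  have "(SUP \<tau>\<in>stopping_times M T F. INF Q\<in>Qbar M T Y Qs. E \<tau> Q)
      = (SUP \<tau>\<in>finite_stopping_times M T F. INF Q\<in>Qbar M T Y Qs. E \<tau> Q)"
  proof (rule SUP_eq_SUP_subset_approx[OF sub])
    fix \<tau> e assume "\<tau> \<in> stopping_times M T F" "0 < (e::real)"
    then obtain \<sigma> where "\<sigma> \<in> finite_stopping_times M T F"
      "\<And>Q. Q \<in> Qbar M T Y Qs \<Longrightarrow> E \<tau> Q \<le> E \<sigma> Q + ereal e"
      using approx by blast
    then show "\<exists>\<sigma>\<in>finite_stopping_times M T F.
        (INF Q\<in>Qbar M T Y Qs. E \<tau> Q) \<le> (INF Q\<in>Qbar M T Y Qs. E \<sigma> Q) + ereal e"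
      using INF_le_INF_plus_ereal by blast
  qed
  moreover have "(SUP \<tau>\<in>stopping_times M T F. E \<tau> Q) = (SUP \<tau>\<in>finite_stopping_times M T F. E \<tau> Q)"
    if "Q \<in> Qbar M T Y Qs" for Q
  proof (rule SUP_eq_SUP_subset_approx[OF sub])
    fix \<tau> e assume "\<tau> \<in> stopping_times M T F" "0 < (e::real)"
    then show "\<exists>\<sigma>\<in>finite_stopping_times M T F. E \<tau> Q \<le> E \<sigma> Q + ereal e"
      using approx that by blast
  qed
  ultimately show ?thesis unfolding E_def by simp
qed

end
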